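(* Let $b\colon\mathbb N_0\to(0,\infty)$ and $d\colon\mathbb N_0\to[0,\infty)$ satisfy $\sum_{i\ge0}\frac1{b(i)+d(i)}=\infty$, $\sum_{i\ge0}\frac{d(i)}{b(i)+d(i)}=\infty$ and $\sum_{i\ge0}\frac1{(b(i)+d(i))^2}<\infty$, and suppose $\lim_{i\to\infty}d(i)=d^*\in[0,R)$ where $R=\inf_{i\in\mathbb N_0}(b(i)+d(i))$. Suppose that for $\lambda^*>0$ there is a function $r\colon(0,\infty)\to\mathbb R_+$ with $\mathcal K_\alpha\big(\tfrac{\lambda^*}{\lambda^*+d^*}t-\tfrac1{\lambda^*+d^*}\mathcal K_\alpha(r(t))\big)-\mathcal K_\alpha(r(t))=\mathcal O(1)$. Then $\sup_{t\ge0}\big|\log\mathbb P(L>t)+d^*t+\mathcal K_\alpha(t)\big|<\infty$.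
   Context: Let $(E_i)_{i\in\mathbb N_0}$ be independent with $E_i\sim\mathrm{Exp}(b(i)+d(i))$, $S_k=\sum_{i=0}^{k-1}E_i$, and independently let $(B_i)_{i\in\mathbb N_0}$ be independent Bernoulli with $\mathbb P(B_i=1)=\frac{b(i)}{b(i)+d(i)}$, $D=\inf\{i:B_i=0\}$; the lifetime is $L=S_{D+1}$. $\varphi_1(k)=\sum_{i=0}^{k-1}\frac1{b(i)+d(i)}$, $\alpha(k)=\sum_{i=0}^{k-1}\frac{d(i)-d^*}{b(i)+d(i)}$, both extended to $\mathbb R_+$ by linear interpolation ($\varphi_1$ is then strictly increasing and invertible), and $\mathcal K_\alpha(t)=\alpha(\varphi_1^{-1}(t))$. *)

theory Defs
  imports "HOL-Probability.Probability" "HOL-Library.Landau_Symbols"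
begin

definition lin_interp :: "(nat \<Rightarrow> real) \<Rightarrow> real \<Rightarrow> real" where
  "lin_interp f x = f (nat \<lfloor>x\<rfloor>) + (x - of_int \<lfloor>x\<rfloor>) * (f (Suc (nat \<lfloor>x\<rfloor>)) - f (nat \<lfloor>x\<rfloor>))"

definition phi1 :: "(nat \<Rightarrow> real) \<Rightarrow> (nat \<Rightarrow> real) \<Rightarrow> real \<Rightarrow> real" where
  "phi1 b d = lin_interp (\<lambda>k. \<Sum>i<k. 1 / (b i + d i))"

definition alpha_fun :: "(nat \<Rightarrow> real) \<Rightarrow> (nat \<Rightarrow> real) \<Rightarrow> real \<Rightarrow> real \<Rightarrow> real" where
  "alpha_fun b d dstar = lin_interp (\<lambda>k. \<Sum>i<k. (d i - dstar) / (b i + d i))"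

definition K_alpha :: "(nat \<Rightarrow> real) \<Rightarrow> (nat \<Rightarrow> real) \<Rightarrow> real \<Rightarrow> real \<Rightarrow> real" where
  "K_alpha b d dstar t = alpha_fun b d dstar (the_inv_into {0..} (phi1 b d) t)"

definition first_death :: "(nat \<Rightarrow> 'a \<Rightarrow> real) \<Rightarrow> 'a \<Rightarrow> nat" where
  "first_death B \<omega> = (LEAST i. B i \<omega> = 0)"

definition lifetime :: "(nat \<Rightarrow> 'a \<Rightarrow> real) \<Rightarrow> (nat \<Rightarrow> 'a \<Rightarrow> real) \<Rightarrow> 'a \<Rightarrow> real" where
  "lifetime E B \<omega> = (\<Sum>i\<le>first_death B \<omega>. E i \<omega>)"

end

theory Submission
  imports Defs
begin

text \<open>
  Let pi(k) be the probability that the first k coin flips are births and let m be the index with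
  phi_1(m) <= t < phi_1(m + 1), so that K_alpha(t) = alpha(m) + O(1). Because
  sum 1/(b i + d i)^2 < infinity, log pi(k) = - alpha(k) - d* phi_1(k) + O(1).

  Upper bound: L > t forces either D >= m, of probability pi(m), or D = k < m and S_(k+1) > t.
  A Chernoff bound with an exponent lambda strictly between d* and R, combined with
  alpha(m) - alpha(k) <= eta (phi_1(m) - phi_1(k)) + O(1) for eta = (lambda - d*)/2 (a consequence
  of d i --> d*), bounds the k-th of these probabilities by exp(- alpha(m) - d* t) times the k-th
  term of a Riemann sum of the integral of exp(- eta (t - s)) over s <= t.

  Lower bound: once phi_1(n) >= t + V + 2, where V = sum 1/(b i + d i)^2, Markov's inequality for
  exp(- S_(k+1)) gives P(S_(k+1) <= t) <= 1/2 for every k >= n; hence P(L > t) >= pi(n)/4, and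
  phi_1(n) - t is bounded.
\<close>

lemma exists_bracketing_index:
  fixes f :: "nat \<Rightarrow> real"
  assumes "f 0 \<le> t" and "\<exists>k. t < f k"
  shows "\<exists>m. f m \<le> t \<and> t < f (Suc m)"
proof -
  define k where "k = (LEAST k. t < f k)"
  have k: "t < f k" unfolding k_def by (rule LeastI_ex) fact
  then obtain m where m: "k = Suc m" using assms(1) by (cases k) auto
  have "m < k" using m by simp
  then have "\<not> t < f m" unfolding k_def by (rule not_less_Least)
  then show ?thesis using k m by (auto simp: not_less)
qed

lemma not_summable_partial_sums_unbounded:
  fixes f :: "nat \<Rightarrow> real"
  assumes "\<And>i. 0 \<le> f i" and "\<not> summable f"
  shows "\<exists>k. T < (\<Sum>i<k. f i)"
proof (rule ccontr)
  assume "\<not> ?thesis"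
  then have "summable f" using assms(1) by (intro summableI_nonneg_bounded[of f T]) (auto simp: not_less)
  then show False using assms(2) by contradiction
qed

lemma sum_lessThan_diff:
  fixes f :: "nat \<Rightarrow> 'a::ab_group_add"
  assumes "k \<le> m"
  shows "(\<Sum>i<m. f i) - (\<Sum>i<k. f i) = (\<Sum>i\<in>{k..<m}. f i)"
  using sum_diff_nat_ivl[of 0 k m f] assms by (simp add: atLeast0LessThan)

lemma prod_if_1_0:
  assumes "finite A"
  shows "(\<Prod>i\<in>A. if P i then 1 else 0 :: real) = (if \<forall>i\<in>A. P i then 1 else 0)"
  using assms by (auto simp: prod_zero_iff intro: prod.neutral)

lemma eventually_le_imp_interval_sums_le:
  fixes x y :: "nat \<Rightarrow> real"
  assumes y: "\<And>i. 0 \<le> y i" and ev: "eventually (\<lambda>i. x i \<le> y i) sequentially"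
  shows "\<exists>C. \<forall>k m. (\<Sum>i\<in>{k..<m}. x i) \<le> (\<Sum>i\<in>{k..<m}. y i) + C"
proof -
  obtain N where N: "\<And>i. N \<le> i \<Longrightarrow> x i \<le> y i" using ev by (auto simp: eventually_sequentially)
  define c where "c i = (if i < N then \<bar>x i\<bar> else 0)" for i
  have "(\<Sum>i\<in>{k..<m}. x i) \<le> (\<Sum>i\<in>{k..<m}. y i) + (\<Sum>i<N. c i)" for k m
  proof -
    have "(\<Sum>i\<in>{k..<m}. x i) \<le> (\<Sum>i\<in>{k..<m}. y i + c i)"
    proof (intro sum_mono)
      fix i show "x i \<le> y i + c i"
        using N[of i] y[of i] by (cases "i < N") (auto simp: c_def)
    qed
    moreover have "(\<Sum>i\<in>{k..<m}. c i) = (\<Sum>i\<in>{k..<m} \<inter> {..<N}. c i)"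
      by (rule sum.mono_neutral_right) (auto simp: c_def)
    moreover have "\<dots> \<le> (\<Sum>i<N. c i)"
      by (rule sum_mono2) (auto simp: c_def)
    ultimately show ?thesis unfolding sum.distrib by linarith
  qed
  then show ?thesis by blast
qed

lemma sum_increment_mult_exp_le:
  fixes f :: "nat \<Rightarrow> real"
  assumes eta: "0 < eta"
  shows "(\<Sum>k<m. (f (Suc k) - f k) * exp (eta * f k)) \<le> (exp (eta * f m) - exp (eta * f 0)) / eta"
proof -
  have "(f (Suc k) - f k) * exp (eta * f k) \<le> (exp (eta * f (Suc k)) - exp (eta * f k)) / eta" for k
  proof -
    have "exp (eta * f k) * (1 + eta * (f (Suc k) - f k)) \<le> exp (eta * f k) * exp (eta * (f (Suc k) - f k))"
      by (intro mult_left_mono exp_ge_add_one_self) simp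
    then show ?thesis
      using eta by (simp add: field_simps flip: exp_add)
  qed
  then have "(\<Sum>k<m. (f (Suc k) - f k) * exp (eta * f k))
      \<le> (\<Sum>k<m. (exp (eta * f (Suc k)) - exp (eta * f k)) / eta)"
    by (intro sum_mono)
  also have "\<dots> = (exp (eta * f m) - exp (eta * f 0)) / eta"
    using sum_lessThan_telescope[of "\<lambda>k. exp (eta * f k)" m] by (simp add: sum_divide_distrib[symmetric])
  finally show ?thesis .
qed

lemma exp_neg_odds_le:
  fixes p :: real
  assumes "0 < p"
  shows "exp (- ((1 - p) / p)) \<le> p"
proof -
  have "1 / p = 1 + (1 - p) / p" using assms by (simp add: field_simps)
  also have "\<dots> \<le> exp ((1 - p) / p)" by (rule exp_ge_add_one_self)
  finally show ?thesis using assms by (simp add: exp_minus field_simps)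
qed

lemma ratio_le_exp_quadratic:
  fixes a s R :: real
  assumes s: "0 \<le> s" "s < R" and R: "R \<le> a"
  shows "a / (a - s) \<le> exp (s / a + s\<^sup>2 * R / (R - s) * (1 / a\<^sup>2))"
proof -
  have as: "0 < a - s" "0 < a" using s R by auto
  have "a / (a - s) = 1 + s / (a - s)" using as by (simp add: field_simps)
  also have "\<dots> \<le> exp (s / (a - s))" by (rule exp_ge_add_one_self)
  also have "s / (a - s) \<le> s / a + s\<^sup>2 * R / (R - s) * (1 / a\<^sup>2)"
  proof -
    have "a * (R - s) \<le> R * (a - s)" using R s by (simp add: algebra_simps mult_right_mono)
    then have inv: "1 / (a - s) \<le> R / ((R - s) * a)"
      using as s by (simp add: field_simps)
    have "s / (a - s) = s / a + (s\<^sup>2 / a) * (1 / (a - s))"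
      using as by (simp add: field_simps power2_eq_square)
    also have "\<dots> \<le> s / a + (s\<^sup>2 / a) * (R / ((R - s) * a))"
      using inv as by (intro add_left_mono mult_left_mono) auto
    also have "\<dots> = s / a + s\<^sup>2 * R / (R - s) * (1 / a\<^sup>2)"
      by (simp add: power2_eq_square field_simps)
    finally show ?thesis .
  qed
  finally show ?thesis by simp
qed

lemma ratio_plus_one_le_exp:
  fixes a :: real
  assumes "0 < a"
  shows "a / (a + 1) \<le> exp (- (1 / a) + 1 / a\<^sup>2)"
proof -
  have "a / (a + 1) = 1 + - (1 / (a + 1))" using assms by (simp add: field_simps)
  also have "\<dots> \<le> exp (- (1 / (a + 1)))" by (rule exp_ge_add_one_self)
  also have "- (1 / (a + 1)) \<le> - (1 / a) + 1 / a\<^sup>2"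
    using assms by (simp add: field_simps power2_eq_square)
  finally show ?thesis by simp
qed

section \<open>Linear interpolation of partial sums\<close>

lemma lin_interp_partial_sums:
  fixes f :: "nat \<Rightarrow> real"
  assumes "0 \<le> \<theta>" "\<theta> < 1"
  shows "lin_interp (\<lambda>k. \<Sum>i<k. f i) (real m + \<theta>) = (\<Sum>i<m. f i) + \<theta> * f m"
proof -
  have "\<lfloor>real m + \<theta>\<rfloor> = int m" using assms by (intro floor_unique) auto
  then show ?thesis by (simp add: lin_interp_def)
qed

lemma nonneg_eq_nat_plus_frac:
  assumes "0 \<le> x"
  obtains m \<theta> where "x = real m + \<theta>" "0 \<le> \<theta>" "\<theta> < 1"
proof
  show "x = real (nat \<lfloor>x\<rfloor>) + (x - real (nat \<lfloor>x\<rfloor>))" by simp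
qed (use assms in linarith)+

lemma inj_on_lin_interp_partial_sums:
  fixes f :: "nat \<Rightarrow> real"
  assumes f: "\<And>i. 0 < f i"
  shows "inj_on (lin_interp (\<lambda>k. \<Sum>i<k. f i)) {0..}"
proof -
  let ?F = "lin_interp (\<lambda>k. \<Sum>i<k. f i)"
  have less: "?F (real m + \<theta>) < ?F (real n + \<theta>')"
    if "m < n" "0 \<le> \<theta>" "\<theta> < 1" "0 \<le> \<theta>'" "\<theta>' < 1" for m n \<theta> \<theta>'
  proof -
    have "?F (real m + \<theta>) < (\<Sum>i<Suc m. f i)"
      using that f[of m] by (simp add: lin_interp_partial_sums)
    also have "\<dots> \<le> (\<Sum>i<n. f i)"
      using that by (intro sum_mono2) (auto intro: less_imp_le f)
    also have "\<dots> \<le> ?F (real n + \<theta>')"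
      using that f[of n] by (simp add: lin_interp_partial_sums)
    finally show ?thesis .
  qed
  show ?thesis
  proof (rule inj_onI)
    fix x y :: real assume "x \<in> {0..}" "y \<in> {0..}" and eq: "?F x = ?F y"
    then obtain m \<theta> n \<theta>' where x: "x = real m + \<theta>" "0 \<le> \<theta>" "\<theta> < 1"
      and y: "y = real n + \<theta>'" "0 \<le> \<theta>'" "\<theta>' < 1"
      by (metis atLeast_iff nonneg_eq_nat_plus_frac)
    have "m = n" using less[of m n] less[of n m] x y eq by (metis linorder_neqE_nat less_irrefl)
    then show "x = y" using eq x y f[of n] by (simp add: lin_interp_partial_sums)
  qed
qed

section \<open>Death events of the jump chain\<close>

lemma nn_integral_exp_mult_exponential:
  assumes D: "distributed M lborel X (exponential_density l)" and l: "0 < l" and s: "s < l"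
  shows "(\<integral>\<^sup>+\<omega>. ennreal (exp (s * X \<omega>)) \<partial>M) = ennreal (l / (l - s))"
proof -
  have "(\<integral>\<^sup>+\<omega>. ennreal (exp (s * X \<omega>)) \<partial>M)
      = (\<integral>\<^sup>+x. ennreal (exponential_density l x) * ennreal (exp (s * x)) \<partial>lborel)"
    by (rule distributed_nn_integral[OF D, symmetric]) simp
  also have "\<dots> = (\<integral>\<^sup>+x. ennreal (l / (l - s)) * ennreal (exponential_density (l - s) x) \<partial>lborel)"
  proof (intro nn_integral_cong)
    fix x :: real
    show "ennreal (exponential_density l x) * ennreal (exp (s * x))
        = ennreal (l / (l - s)) * ennreal (exponential_density (l - s) x)"
    proof (cases "x < 0")
      case False
      then have "exponential_density l x * exp (s * x) = l / (l - s) * exponential_density (l - s) x"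
        using s by (simp add: exponential_density_def field_simps flip: exp_add)
      then show ?thesis
        using False l s by (simp add: ennreal_mult'[symmetric] exponential_density_def)
    qed (simp add: exponential_density_def)
  qed
  also have "\<dots> = ennreal (l / (l - s)) * (\<integral>\<^sup>+x. ennreal (exponential_density (l - s) x) \<partial>lborel)"
    by (rule nn_integral_cmult) simp
  also have "(\<integral>\<^sup>+x. ennreal (exponential_density (l - s) x) \<partial>lborel) = 1"
    using nn_integral_erlang_ith_moment[of "l - s" 0 0] s by simp
  finally show ?thesis by simp
qed

locale birth_death_lifetime = prob_space M for M :: "'a measure" +
  fixes E B :: "nat \<Rightarrow> 'a \<Rightarrow> real" and b d :: "nat \<Rightarrow> real"
  assumes indep: "indep_vars (\<lambda>_. borel) (case_sum E B) UNIV"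
    and E_distr: "\<And>i. distributed M lborel (E i) (exponential_density (b i + d i))"
    and B_measurable[measurable]: "\<And>i. B i \<in> borel_measurable M"
    and B_01: "\<And>i \<omega>. \<omega> \<in> space M \<Longrightarrow> B i \<omega> \<in> {0, 1}"
    and B_prob: "\<And>i. measure M {\<omega> \<in> space M. B i \<omega> = 1} = b i / (b i + d i)"
    and b_pos: "\<And>i. b i > 0"
    and d_nonneg: "\<And>i. d i \<ge> 0"
begin

lemma E_measurable[measurable]: "E i \<in> borel_measurable M"
  using distributed_measurable[OF E_distr[of i]] by simp

definition rate :: "nat \<Rightarrow> real" where "rate i = b i + d i"
definition birth_prob :: "nat \<Rightarrow> real" where "birth_prob i = b i / rate i"
definition death_prob :: "nat \<Rightarrow> real" where "death_prob i = d i / rate i"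

lemma rate_pos: "0 < rate i"
  using b_pos[of i] d_nonneg[of i] by (simp add: rate_def)

lemma birth_prob_plus_death_prob: "birth_prob i + death_prob i = 1"
  using rate_pos[of i] by (simp add: birth_prob_def death_prob_def rate_def flip: add_divide_distrib)

lemma birth_prob_pos: "0 < birth_prob i"
  using rate_pos[of i] b_pos[of i] by (simp add: birth_prob_def)

lemma death_prob_nonneg: "0 \<le> death_prob i"
  using rate_pos[of i] d_nonneg[of i] by (simp add: death_prob_def)

definition survival_prob :: "nat \<Rightarrow> real" where
  "survival_prob k = (\<Prod>i<k. birth_prob i)"

text \<open>The expectation of exp (s * jump_time k), for s below all rates.\<close>
definition jump_mgf :: "real \<Rightarrow> nat \<Rightarrow> real" where
  "jump_mgf s k = (\<Prod>i\<le>k. rate i / (rate i - s))"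

lemma survival_prob_pos: "0 < survival_prob k"
  by (simp add: survival_prob_def prod_pos birth_prob_pos)

lemma jump_mgf_pos: "(\<And>i. s < rate i) \<Longrightarrow> 0 < jump_mgf s k"
  using rate_pos by (simp add: jump_mgf_def prod_pos)

lemma survival_prob_Suc: "survival_prob (Suc k) = survival_prob k - survival_prob k * death_prob k"
proof -
  have "survival_prob (Suc k)
      = survival_prob k * (birth_prob k + death_prob k) - survival_prob k * death_prob k"
    by (simp add: survival_prob_def algebra_simps)
  then show ?thesis using birth_prob_plus_death_prob[of k] by simp
qed

lemma survival_prob_antimono: "k \<le> j \<Longrightarrow> survival_prob j \<le> survival_prob k"
proof (induction j rule: dec_induct)
  case (step j)
  have "0 \<le> survival_prob j * death_prob j"
    using survival_prob_pos[of j] death_prob_nonneg[of j] by simp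
  then show ?case using step.IH survival_prob_Suc[of j] by simp
qed simp

text \<open>jump_time k is S_(k+1) of the paper, so that lifetime E B = jump_time D.\<close>
definition jump_time :: "nat \<Rightarrow> 'a \<Rightarrow> real" where
  "jump_time k \<omega> = (\<Sum>i\<le>k. E i \<omega>)"

definition alive :: "nat \<Rightarrow> 'a set" where
  "alive k = {\<omega> \<in> space M. \<forall>i<k. B i \<omega> = 1}"

definition dies_at :: "nat \<Rightarrow> 'a set" where
  "dies_at k = {\<omega> \<in> space M. (\<forall>i<k. B i \<omega> = 1) \<and> B k \<omega> = 0}"

definition lifetime_gt :: "real \<Rightarrow> 'a set" where
  "lifetime_gt t = {\<omega> \<in> space M. t < lifetime E B \<omega>}"

lemma jump_time_measurable[measurable]: "jump_time k \<in> borel_measurable M"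
  unfolding jump_time_def by measurable

lemma alive_sets[measurable]: "alive k \<in> sets M"
  unfolding alive_def by measurable

lemma dies_at_sets[measurable]: "dies_at k \<in> sets M"
  unfolding dies_at_def by measurable

lemma lifetime_measurable[measurable]: "lifetime E B \<in> borel_measurable M"
proof -
  have "(\<lambda>\<omega>. jump_time (first_death B \<omega>) \<omega>) \<in> borel_measurable M"
    by (rule measurable_compose_countable[where f = jump_time]) (auto simp: first_death_def)
  then show ?thesis by (simp add: lifetime_def[abs_def] jump_time_def)
qed

lemma lifetime_gt_sets[measurable]: "lifetime_gt t \<in> sets M"
  unfolding lifetime_gt_def by measurable

lemma nn_integral_prod_indep:
  fixes F :: "nat + nat \<Rightarrow> real \<Rightarrow> real"
  assumes K: "finite K" and F: "\<And>x. F x \<in> borel_measurable borel" "\<And>x y. 0 \<le> F x y"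
  shows "(\<integral>\<^sup>+\<omega>. ennreal (\<Prod>x\<in>K. F x (case_sum E B x \<omega>)) \<partial>M)
      = (\<Prod>x\<in>K. \<integral>\<^sup>+\<omega>. ennreal (F x (case_sum E B x \<omega>)) \<partial>M)"
proof -
  have "indep_vars (\<lambda>_. borel) (\<lambda>x \<omega>. ennreal (F x (case_sum E B x \<omega>))) K"
    by (rule indep_vars_compose2[OF indep_vars_subset[OF indep]]) (auto intro: measurable_compose[OF F(1)])
  then have "(\<integral>\<^sup>+\<omega>. (\<Prod>x\<in>K. ennreal (F x (case_sum E B x \<omega>))) \<partial>M)
      = (\<Prod>x\<in>K. \<integral>\<^sup>+\<omega>. ennreal (F x (case_sum E B x \<omega>)) \<partial>M)"
    by (rule indep_vars_nn_integral[OF K]) simp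
  then show ?thesis by (simp add: prod_ennreal F(2))
qed

lemma nn_integral_birth: "(\<integral>\<^sup>+\<omega>. ennreal (if B i \<omega> = 1 then 1 else 0) \<partial>M) = ennreal (birth_prob i)"
proof -
  have "(\<integral>\<^sup>+\<omega>. ennreal (if B i \<omega> = 1 then 1 else 0) \<partial>M)
      = (\<integral>\<^sup>+\<omega>. indicator {\<omega> \<in> space M. B i \<omega> = 1} \<omega> \<partial>M)"
    by (intro nn_integral_cong) (auto split: split_indicator)
  also have "\<dots> = ennreal (birth_prob i)"
    by (simp add: emeasure_eq_measure B_prob birth_prob_def rate_def)
  finally show ?thesis .
qed

lemma nn_integral_death: "(\<integral>\<^sup>+\<omega>. ennreal (if B i \<omega> = 0 then 1 else 0) \<partial>M) = ennreal (death_prob i)"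
proof -
  have "(\<integral>\<^sup>+\<omega>. ennreal (if B i \<omega> = 0 then 1 else 0) \<partial>M)
      = (\<integral>\<^sup>+\<omega>. indicator (space M - {\<omega> \<in> space M. B i \<omega> = 1}) \<omega> \<partial>M)"
    by (intro nn_integral_cong) (use B_01 in \<open>fastforce split: split_indicator\<close>)
  also have "\<dots> = ennreal (1 - birth_prob i)"
    by (simp add: emeasure_eq_measure prob_compl B_prob birth_prob_def rate_def)
  also have "1 - birth_prob i = death_prob i"
    using birth_prob_plus_death_prob[of i] by simp
  finally show ?thesis .
qed

lemma measure_alive: "measure M (alive k) = survival_prob k"
proof -
  define F :: "nat + nat \<Rightarrow> real \<Rightarrow> real" where "F x y = (if y = 1 then 1 else 0)" for x y
  have "emeasure M (alive k) = (\<integral>\<^sup>+\<omega>. indicator (alive k) \<omega> \<partial>M)"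
    by simp
  also have "\<dots> = (\<integral>\<^sup>+\<omega>. ennreal (\<Prod>i<k. if B i \<omega> = 1 then 1 else 0) \<partial>M)"
    by (intro nn_integral_cong) (auto simp: alive_def prod_if_1_0 indicator_def)
  also have "\<dots> = (\<integral>\<^sup>+\<omega>. ennreal (\<Prod>x\<in>Inr ` {..<k}. F x (case_sum E B x \<omega>)) \<partial>M)"
    by (simp add: prod.reindex F_def)
  also have "\<dots> = (\<Prod>x\<in>Inr ` {..<k}. \<integral>\<^sup>+\<omega>. ennreal (F x (case_sum E B x \<omega>)) \<partial>M)"
    by (rule nn_integral_prod_indep) (auto simp: F_def)
  also have "\<dots> = (\<Prod>i<k. ennreal (birth_prob i))"
    by (simp add: prod.reindex F_def nn_integral_birth)
  also have "\<dots> = ennreal (survival_prob k)"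
    by (simp add: survival_prob_def prod_ennreal less_imp_le[OF birth_prob_pos])
  finally show ?thesis
    using survival_prob_pos[of k] by (simp add: emeasure_eq_measure)
qed

lemma nn_integral_dies_at_exp_jump_time:
  assumes s: "\<And>i. s < rate i"
  shows "(\<integral>\<^sup>+\<omega>. indicator (dies_at k) \<omega> * ennreal (exp (s * jump_time k \<omega>)) \<partial>M)
       = ennreal (survival_prob k * death_prob k * jump_mgf s k)"
proof -
  txt \<open>One factor of the integrand for each coordinate of the independent family case_sum E B.\<close>
  define F :: "nat + nat \<Rightarrow> real \<Rightarrow> real" where
    "F x y = (case x of Inl i \<Rightarrow> exp (s * y)
       | Inr i \<Rightarrow> if i < k then (if y = 1 then 1 else 0) else (if y = 0 then 1 else 0))" for x y
  let ?K = "Inl ` {..k} \<union> Inr ` {..k}"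
  have F_meas: "F x \<in> borel_measurable borel" for x
    unfolding F_def[abs_def] by (cases x) auto
  have prod_K: "(\<Prod>x\<in>?K. G x) = (\<Prod>i\<le>k. G (Inl i)) * ((\<Prod>i<k. G (Inr i)) * G (Inr k))"
    for G :: "nat + nat \<Rightarrow> 'b::comm_monoid_mult"
    by (subst prod.union_disjoint) (auto simp: prod.reindex lessThan_Suc_atMost[symmetric])
  have integrand: "indicator (dies_at k) \<omega> * ennreal (exp (s * jump_time k \<omega>))
      = ennreal (\<Prod>x\<in>?K. F x (case_sum E B x \<omega>))" if "\<omega> \<in> space M" for \<omega>
  proof -
    have "(\<Prod>i\<le>k. F (Inl i) (E i \<omega>)) = exp (s * jump_time k \<omega>)"
      by (simp add: F_def jump_time_def exp_sum sum_distrib_left)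
    moreover have "(\<Prod>i<k. F (Inr i) (B i \<omega>)) = (\<Prod>i<k. if B i \<omega> = 1 then 1 else 0)"
      by (intro prod.cong) (auto simp: F_def)
    ultimately have "(\<Prod>x\<in>?K. F x (case_sum E B x \<omega>))
        = exp (s * jump_time k \<omega>) * (if \<omega> \<in> dies_at k then 1 else 0)"
      using that by (simp add: prod_K F_def dies_at_def prod_if_1_0)
    then show ?thesis by (simp add: indicator_def)
  qed
  have "(\<integral>\<^sup>+\<omega>. indicator (dies_at k) \<omega> * ennreal (exp (s * jump_time k \<omega>)) \<partial>M)
      = (\<integral>\<^sup>+\<omega>. ennreal (\<Prod>x\<in>?K. F x (case_sum E B x \<omega>)) \<partial>M)"
    by (intro nn_integral_cong integrand)
  also have "\<dots> = (\<Prod>x\<in>?K. \<integral>\<^sup>+\<omega>. ennreal (F x (case_sum E B x \<omega>)) \<partial>M)"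
    by (rule nn_integral_prod_indep[OF _ F_meas]) (auto simp: F_def split: sum.split)
  also have "\<dots> = (\<Prod>i\<le>k. ennreal (rate i / (rate i - s)))
      * ((\<Prod>i<k. ennreal (birth_prob i)) * ennreal (death_prob k))"
    unfolding prod_K using s
    by (simp add: F_def nn_integral_exp_mult_exponential[OF E_distr] rate_pos[unfolded rate_def]
        nn_integral_birth nn_integral_death rate_def)
  also have "(\<Prod>i\<le>k. ennreal (rate i / (rate i - s))) = ennreal (jump_mgf s k)"
    unfolding jump_mgf_def using s rate_pos
    by (intro prod_ennreal divide_nonneg_pos) (auto simp: less_imp_le)
  also have "(\<Prod>i<k. ennreal (birth_prob i)) = ennreal (survival_prob k)"
    unfolding survival_prob_def by (intro prod_ennreal less_imp_le birth_prob_pos)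
  finally show ?thesis
    using survival_prob_pos[of k] jump_mgf_pos[of s k, OF s] death_prob_nonneg[of k]
    by (simp add: ennreal_mult mult_ac)
qed

lemma measure_dies_at: "measure M (dies_at k) = survival_prob k * death_prob k"
proof -
  have "emeasure M (dies_at k)
      = (\<integral>\<^sup>+\<omega>. indicator (dies_at k) \<omega> * ennreal (exp (0 * jump_time k \<omega>)) \<partial>M)"
    by simp
  also have "\<dots> = ennreal (survival_prob k * death_prob k * jump_mgf 0 k)"
    using rate_pos by (intro nn_integral_dies_at_exp_jump_time)
  also have "jump_mgf 0 k = 1"
    using rate_pos by (simp add: jump_mgf_def less_imp_neq[symmetric])
  finally show ?thesis
    using survival_prob_pos[of k] death_prob_nonneg[of k] by (simp add: emeasure_eq_measure)
qed

text \<open>Markov's inequality for exp (s * jump_time k) on dies_at k, for either sign of s.\<close>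
lemma measure_dies_at_exp_tail_le:
  assumes s: "\<And>i. s < rate i"
  shows "measure M {\<omega> \<in> dies_at k. s * t \<le> s * jump_time k \<omega>}
       \<le> survival_prob k * death_prob k * jump_mgf s k * exp (- s * t)"
proof -
  let ?A = "{\<omega> \<in> dies_at k. s * t \<le> s * jump_time k \<omega>}"
  have A_sets: "?A \<in> sets M" by measurable
  have "emeasure M ?A = (\<integral>\<^sup>+\<omega>. indicator ?A \<omega> \<partial>M)"
    using A_sets by simp
  also have "\<dots> \<le> (\<integral>\<^sup>+\<omega>. ennreal (exp (- s * t))
      * (indicator (dies_at k) \<omega> * ennreal (exp (s * jump_time k \<omega>))) \<partial>M)"
  proof (intro nn_integral_mono)
    fix \<omega>
    have "1 \<le> exp (- s * t) * exp (s * jump_time k \<omega>)" if "s * t \<le> s * jump_time k \<omega>"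
      using that by (simp flip: exp_add)
    then show "indicator ?A \<omega> \<le> ennreal (exp (- s * t))
        * (indicator (dies_at k) \<omega> * ennreal (exp (s * jump_time k \<omega>)))"
      by (auto simp: indicator_def ennreal_mult[symmetric] simp del: ennreal_1 intro: ennreal_leI
          simp flip: ennreal_1)
  qed
  also have "\<dots> = ennreal (exp (- s * t)) * ennreal (survival_prob k * death_prob k * jump_mgf s k)"
    by (simp add: nn_integral_cmult nn_integral_dies_at_exp_jump_time[OF s])
  finally show ?thesis
    using survival_prob_pos[of k] death_prob_nonneg[of k] jump_mgf_pos[of s k, OF s]
    by (simp add: emeasure_eq_measure ennreal_mult[symmetric] mult_ac)
qed

definition dies_after :: "nat \<Rightarrow> real \<Rightarrow> 'a set" where
  "dies_after k t = {\<omega> \<in> dies_at k. t < jump_time k \<omega>}"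

lemma dies_after_sets[measurable]: "dies_after k t \<in> sets M"
  unfolding dies_after_def by measurable

lemma measure_dies_after_le:
  assumes "0 \<le> s" and "\<And>i. s < rate i"
  shows "measure M (dies_after k t) \<le> survival_prob k * death_prob k * jump_mgf s k * exp (- s * t)"
proof -
  have "dies_after k t \<subseteq> {\<omega> \<in> dies_at k. s * t \<le> s * jump_time k \<omega>}"
    using assms(1) by (auto simp: dies_after_def mult_left_mono)
  then have "measure M (dies_after k t) \<le> measure M {\<omega> \<in> dies_at k. s * t \<le> s * jump_time k \<omega>}"
    by (intro finite_measure_mono) measurable
  also have "\<dots> \<le> survival_prob k * death_prob k * jump_mgf s k * exp (- s * t)"
    by (rule measure_dies_at_exp_tail_le) fact
  finally show ?thesis .
qed

lemma measure_dies_after_ge: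
  "survival_prob k * death_prob k * (1 - jump_mgf (- 1) k * exp t) \<le> measure M (dies_after k t)"
proof -
  let ?early = "{\<omega> \<in> dies_at k. - 1 * t \<le> - 1 * jump_time k \<omega>}"
  have "dies_at k \<subseteq> dies_after k t \<union> ?early"
    by (auto simp: dies_after_def)
  then have "measure M (dies_at k) \<le> measure M (dies_after k t \<union> ?early)"
    by (intro finite_measure_mono) measurable
  also have "\<dots> \<le> measure M (dies_after k t) + measure M ?early"
    by (rule measure_subadditive) measurable
  finally have "measure M (dies_at k) \<le> measure M (dies_after k t) + measure M ?early" .
  moreover have "measure M ?early \<le> survival_prob k * death_prob k * jump_mgf (- 1) k * exp t"
    using measure_dies_at_exp_tail_le[of "- 1" k t] rate_pos by (simp add: less_trans[of "- 1" 0])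
  ultimately show ?thesis by (simp add: measure_dies_at algebra_simps)
qed

lemma dies_after_subset_lifetime_gt: "dies_after k t \<subseteq> lifetime_gt t"
proof
  fix \<omega> assume \<omega>: "\<omega> \<in> dies_after k t"
  then have "first_death B \<omega> = k"
    unfolding first_death_def
    by (intro Least_equality) (auto simp: dies_after_def dies_at_def, metis not_less zero_neq_one)
  then show "\<omega> \<in> lifetime_gt t"
    using \<omega> by (auto simp: lifetime_gt_def dies_after_def dies_at_def lifetime_def jump_time_def)
qed

lemma lifetime_gt_subset: "lifetime_gt t \<subseteq> alive m \<union> (\<Union>k<m. dies_after k t)"
proof
  fix \<omega> assume \<omega>: "\<omega> \<in> lifetime_gt t"
  then have sp: "\<omega> \<in> space M" by (simp add: lifetime_gt_def)
  show "\<omega> \<in> alive m \<union> (\<Union>k<m. dies_after k t)"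
  proof (cases "\<forall>i<m. B i \<omega> = 1")
    case True
    then show ?thesis using sp by (simp add: alive_def)
  next
    case False
    then obtain i where i: "i < m" "B i \<omega> = 0" using B_01[OF sp] by auto
    define k where "k = first_death B \<omega>"
    have "B k \<omega> = 0" unfolding k_def first_death_def by (rule LeastI[of _ i]) (rule i)
    moreover have "k \<le> i" unfolding k_def first_death_def by (rule Least_le) (rule i)
    moreover have "B j \<omega> = 1" if "j < k" for j
      using not_less_Least[of j "\<lambda>i. B i \<omega> = 0"] that B_01[OF sp, of j]
      by (auto simp: k_def first_death_def)
    moreover have "t < jump_time k \<omega>"
      using \<omega> by (simp add: lifetime_gt_def lifetime_def k_def jump_time_def)
    ultimately have "\<omega> \<in> dies_after k t \<and> k < m"
      using sp i by (simp add: dies_after_def dies_at_def)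
    then show ?thesis by auto
  qed
qed

lemma measure_lifetime_gt_le:
  "measure M (lifetime_gt t) \<le> survival_prob m + (\<Sum>k<m. measure M (dies_after k t))"
proof -
  have "measure M (lifetime_gt t) \<le> measure M (alive m \<union> (\<Union>k<m. dies_after k t))"
    by (rule finite_measure_mono[OF lifetime_gt_subset]) measurable
  also have "\<dots> \<le> measure M (alive m) + measure M (\<Union>k<m. dies_after k t)"
    by (rule measure_subadditive) auto
  also have "measure M (\<Union>k<m. dies_after k t) \<le> (\<Sum>k<m. measure M (dies_after k t))"
    by (rule measure_subadditive_finite) auto
  finally show ?thesis by (simp add: measure_alive)
qed

lemma measure_lifetime_gt_ge:
  "(\<Sum>k\<in>{n..<N}. measure M (dies_after k t)) \<le> measure M (lifetime_gt t)"
proof -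
  have "disjoint_family_on (\<lambda>k. dies_after k t) {n..<N}"
  proof (auto simp: disjoint_family_on_def)
    fix k j \<omega> assume "k \<noteq> j" "\<omega> \<in> dies_after k t" "\<omega> \<in> dies_after j t"
    then show False by (cases "k < j") (auto simp: dies_after_def dies_at_def)
  qed
  then have "(\<Sum>k\<in>{n..<N}. measure M (dies_after k t)) = measure M (\<Union>k\<in>{n..<N}. dies_after k t)"
    by (intro finite_measure_finite_Union[symmetric]) auto
  also have "\<dots> \<le> measure M (lifetime_gt t)"
    by (rule finite_measure_mono) (use dies_after_subset_lifetime_gt in auto)
  finally show ?thesis .
qed

end

section \<open>Asymptotics of the tail of the lifetime\<close>

locale lifetime_asymptotics = birth_death_lifetime +
  fixes dstar :: real
  assumes not_summable_inv_b_plus_d: "\<not> summable (\<lambda>i. 1 / (b i + d i))"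
    and not_summable_d_div_b_plus_d: "\<not> summable (\<lambda>i. d i / (b i + d i))"
    and summable_inv_sq_b_plus_d: "summable (\<lambda>i. 1 / (b i + d i)^2)"
    and d_lim: "d \<longlonglongrightarrow> dstar"
    and dstar_nonneg: "0 \<le> dstar"
    and dstar_lt_Inf: "dstar < (INF i. b i + d i)"
begin

definition R :: real where "R = (INF i. rate i)"
definition phi_nat :: "nat \<Rightarrow> real" where "phi_nat k = (\<Sum>i<k. 1 / rate i)"
definition alpha_nat :: "nat \<Rightarrow> real" where "alpha_nat k = (\<Sum>i<k. (d i - dstar) / rate i)"
definition V :: real where "V = (\<Sum>i. 1 / (rate i)\<^sup>2)"

lemma summable_inv_rate_sq: "summable (\<lambda>i. 1 / (rate i)\<^sup>2)"
  using summable_inv_sq_b_plus_d by (simp add: rate_def)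

lemma V_nonneg: "0 \<le> V"
  unfolding V_def by (rule suminf_nonneg[OF summable_inv_rate_sq]) simp

lemma R_le_rate: "R \<le> rate i"
  unfolding R_def by (rule cINF_lower) (auto intro!: bdd_belowI[of _ 0] less_imp_le rate_pos)

lemma dstar_lt_R: "dstar < R"
  using dstar_lt_Inf by (simp add: R_def rate_def)

lemma R_pos: "0 < R"
  using dstar_lt_R dstar_nonneg by simp

lemma inv_rate_le: "1 / rate i \<le> 1 / R"
  using R_le_rate[of i] R_pos by (simp add: frac_le)

lemma phi_nat_Suc: "phi_nat (Suc k) = phi_nat k + 1 / rate k"
  by (simp add: phi_nat_def)

lemma phi_nat_0 [simp]: "phi_nat 0 = 0"
  by (simp add: phi_nat_def)

lemma phi_nat_mono: "k \<le> j \<Longrightarrow> phi_nat k \<le> phi_nat j"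
  unfolding phi_nat_def by (rule sum_mono2) (auto intro: less_imp_le rate_pos)

lemma phi_nat_nonneg: "0 \<le> phi_nat k"
  using phi_nat_mono[of 0 k] by simp

lemma phi_nat_unbounded: "\<exists>k. T < phi_nat k"
proof -
  have "\<not> summable (\<lambda>i. 1 / rate i)"
    using not_summable_inv_b_plus_d by (simp add: rate_def)
  then show ?thesis
    unfolding phi_nat_def
    by (intro not_summable_partial_sums_unbounded) (simp_all add: less_imp_le[OF rate_pos])
qed

lemma phi_nat_bracket:
  assumes "0 \<le> t"
  obtains m where "phi_nat m \<le> t" "t < phi_nat (Suc m)"
  using exists_bracketing_index[of phi_nat t] assms phi_nat_unbounded by auto

lemma sum_death_prob: "(\<Sum>i<k. death_prob i) = alpha_nat k + dstar * phi_nat k"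
  unfolding death_prob_def alpha_nat_def phi_nat_def
  by (simp add: sum_distrib_left sum.distrib[symmetric] diff_divide_distrib)

definition d_dev :: real where "d_dev = (SOME D. 0 < D \<and> (\<forall>i. \<bar>d i - dstar\<bar> \<le> D))"

lemma d_dev: "0 < d_dev" "\<bar>d i - dstar\<bar> \<le> d_dev"
proof -
  have "Bseq (\<lambda>i. d i - dstar)"
    using d_lim by (intro convergent_imp_Bseq) (auto intro!: convergentI tendsto_diff)
  then have "\<exists>D. 0 < D \<and> (\<forall>i. \<bar>d i - dstar\<bar> \<le> D)"
    by (auto simp: Bseq_def)
  from someI_ex[OF this] show "0 < d_dev" "\<bar>d i - dstar\<bar> \<le> d_dev"
    unfolding d_dev_def by auto
qed

lemma alpha_nat_diff_le: "k \<le> m \<Longrightarrow> \<bar>alpha_nat m - alpha_nat k\<bar> \<le> d_dev * (phi_nat m - phi_nat k)"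
proof -
  assume "k \<le> m"
  then have "\<bar>alpha_nat m - alpha_nat k\<bar> = \<bar>\<Sum>i\<in>{k..<m}. (d i - dstar) / rate i\<bar>"
    by (simp add: alpha_nat_def sum_lessThan_diff)
  also have "\<dots> \<le> (\<Sum>i\<in>{k..<m}. \<bar>d i - dstar\<bar> / rate i)"
    using sum_abs[of "\<lambda>i. (d i - dstar) / rate i"] by (simp add: abs_divide abs_of_pos[OF rate_pos])
  also have "\<dots> \<le> (\<Sum>i\<in>{k..<m}. d_dev * (1 / rate i))"
  proof (intro sum_mono)
    fix i
    show "\<bar>d i - dstar\<bar> / rate i \<le> d_dev * (1 / rate i)"
      using divide_right_mono[OF d_dev(2)[of i] less_imp_le[OF rate_pos[of i]]] by simp
  qed
  also have "\<dots> = d_dev * (phi_nat m - phi_nat k)"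
    using \<open>k \<le> m\<close> by (simp add: phi_nat_def sum_lessThan_diff sum_distrib_left)
  finally show ?thesis .
qed

lemma alpha_nat_increment_le:
  assumes "0 < eta"
  shows "\<exists>C. \<forall>k m. k \<le> m \<longrightarrow> alpha_nat m - alpha_nat k \<le> eta * (phi_nat m - phi_nat k) + C"
proof -
  have "eventually (\<lambda>i. d i < dstar + eta) sequentially"
    using assms by (intro order_tendstoD(2)[OF d_lim]) simp
  then have ev: "eventually (\<lambda>i. (d i - dstar) / rate i \<le> eta * (1 / rate i)) sequentially"
  proof eventually_elim
    case (elim i)
    then show ?case
      using divide_right_mono[of "d i - dstar" eta "rate i"] rate_pos[of i] by simp
  qed
  have nonneg: "0 \<le> eta * (1 / rate i)" for i
    using assms rate_pos[of i] by simp
  obtain C where C: "\<And>k m. (\<Sum>i\<in>{k..<m}. (d i - dstar) / rate i)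
      \<le> (\<Sum>i\<in>{k..<m}. eta * (1 / rate i)) + C"
    using eventually_le_imp_interval_sums_le[OF nonneg ev] by blast
  have "alpha_nat m - alpha_nat k \<le> eta * (phi_nat m - phi_nat k) + C" if "k \<le> m" for k m
  proof -
    have "alpha_nat m - alpha_nat k = (\<Sum>i\<in>{k..<m}. (d i - dstar) / rate i)"
      unfolding alpha_nat_def using that by (rule sum_lessThan_diff)
    moreover have "eta * (phi_nat m - phi_nat k) = (\<Sum>i\<in>{k..<m}. eta * (1 / rate i))"
      unfolding phi_nat_def sum_lessThan_diff[OF that] by (rule sum_distrib_left)
    ultimately show ?thesis using C[of k m] by simp
  qed
  then show ?thesis by blast
qed

lemma inv_rate_tendsto_0: "(\<lambda>i. 1 / rate i) \<longlonglongrightarrow> 0"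
proof -
  have "(\<lambda>i. sqrt (1 / (rate i)\<^sup>2)) \<longlonglongrightarrow> sqrt 0"
    by (intro tendsto_real_sqrt summable_LIMSEQ_zero[OF summable_inv_rate_sq])
  moreover have "sqrt (1 / (rate i)\<^sup>2) = 1 / rate i" for i
    using rate_pos[of i] by (simp add: real_sqrt_divide)
  ultimately show ?thesis by simp
qed

lemma death_prob_le: "death_prob i \<le> (dstar + d_dev) * (1 / rate i)"
  using d_dev(2)[of i] rate_pos[of i] by (simp add: death_prob_def divide_right_mono)

lemma survival_prob_le: "survival_prob k \<le> exp (- alpha_nat k - dstar * phi_nat k)"
proof -
  have "survival_prob k \<le> (\<Prod>i<k. exp (- death_prob i))"
    unfolding survival_prob_def
  proof (intro prod_mono conjI)
    fix i
    show "0 \<le> birth_prob i" using birth_prob_pos[of i] by simp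
    show "birth_prob i \<le> exp (- death_prob i)"
      using exp_ge_add_one_self[of "- death_prob i"] birth_prob_plus_death_prob[of i] by simp
  qed
  also have "\<dots> = exp (- alpha_nat k - dstar * phi_nat k)"
    by (simp add: exp_sum[symmetric] sum_negf sum_death_prob)
  finally show ?thesis .
qed

lemma summable_death_prob_sq_div_birth_prob: "summable (\<lambda>i. (death_prob i)\<^sup>2 / birth_prob i)"
proof (rule summable_comparison_test_ev)
  have "eventually (\<lambda>i. 1 / rate i < 1 / (2 * (dstar + d_dev))) sequentially"
    using d_dev(1) dstar_nonneg by (intro order_tendstoD(2)[OF inv_rate_tendsto_0]) simp
  then show "eventually (\<lambda>i. norm ((death_prob i)\<^sup>2 / birth_prob i)
      \<le> 2 * (dstar + d_dev)\<^sup>2 * (1 / (rate i)\<^sup>2)) sequentially"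
  proof eventually_elim
    case (elim i)
    have "death_prob i \<le> (dstar + d_dev) * (1 / rate i)" by (rule death_prob_le)
    also have "\<dots> \<le> 1 / 2"
      using elim d_dev(1) dstar_nonneg rate_pos[of i] by (simp add: field_simps)
    finally have "1 / 2 \<le> birth_prob i"
      using birth_prob_plus_death_prob[of i] by simp
    then have "(death_prob i)\<^sup>2 / birth_prob i \<le> 2 * (death_prob i)\<^sup>2"
      using mult_right_mono[of 1 "2 * birth_prob i" "(death_prob i)\<^sup>2"] birth_prob_pos[of i]
      by (simp add: field_simps)
    also have "(death_prob i)\<^sup>2 \<le> ((dstar + d_dev) * (1 / rate i))\<^sup>2"
      using death_prob_le[of i] death_prob_nonneg[of i] by (intro power_mono) auto
    finally show ?case
      using birth_prob_pos[of i] by (simp add: power_mult_distrib power_divide)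
  qed
  show "summable (\<lambda>i. 2 * (dstar + d_dev)\<^sup>2 * (1 / (rate i)\<^sup>2))"
    by (intro summable_mult summable_inv_rate_sq)
qed

lemma survival_prob_ge: "\<exists>W. \<forall>k. exp (- alpha_nat k - dstar * phi_nat k - W) \<le> survival_prob k"
proof -
  define w where "w i = (death_prob i)\<^sup>2 / birth_prob i" for i
  have w_nonneg: "0 \<le> w i" for i
    using birth_prob_pos[of i] by (simp add: w_def)
  have w: "summable w"
    unfolding w_def[abs_def] by (rule summable_death_prob_sq_div_birth_prob)
  have "exp (- alpha_nat k - dstar * phi_nat k - suminf w) \<le> survival_prob k" for k
  proof -
    have "exp (- alpha_nat k - dstar * phi_nat k - suminf w) \<le> exp (\<Sum>i<k. - death_prob i - w i)"
      using sum_le_suminf[OF w, of "{..<k}"] w_nonneg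
      by (simp add: sum_death_prob sum_subtractf sum_negf)
    also have "\<dots> \<le> survival_prob k"
      unfolding exp_sum[OF finite_lessThan] survival_prob_def
    proof (intro prod_mono conjI)
      fix i
      have death_eq: "death_prob i = 1 - birth_prob i"
        using birth_prob_plus_death_prob[of i] by simp
      have "- death_prob i - w i = - ((1 - birth_prob i) / birth_prob i)"
        unfolding w_def death_eq using birth_prob_pos[of i] by (simp add: field_simps power2_eq_square)
      then show "exp (- death_prob i - w i) \<le> birth_prob i"
        using exp_neg_odds_le[OF birth_prob_pos] by simp
    qed simp
    finally show ?thesis .
  qed
  then show ?thesis by blast
qed

lemma jump_mgf_le:
  assumes "0 \<le> s" "s < R"
  shows "jump_mgf s k \<le> exp (s * phi_nat (Suc k) + s\<^sup>2 * R / (R - s) * V)"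
proof -
  let ?c = "s\<^sup>2 * R / (R - s)"
  have "jump_mgf s k \<le> (\<Prod>i<Suc k. exp (s / rate i + ?c * (1 / (rate i)\<^sup>2)))"
    unfolding jump_mgf_def lessThan_Suc_atMost[symmetric] using assms R_le_rate
    by (intro prod_mono conjI ratio_le_exp_quadratic divide_nonneg_pos)
      (auto simp: less_le_trans[OF _ R_le_rate] less_imp_le[OF rate_pos])
  also have "\<dots> = exp (\<Sum>i<Suc k. s / rate i + ?c * (1 / (rate i)\<^sup>2))"
    by (rule exp_sum[OF finite_lessThan, symmetric])
  also have "\<dots> = exp (s * phi_nat (Suc k) + ?c * (\<Sum>i<Suc k. 1 / (rate i)\<^sup>2))"
    by (rule arg_cong[where f = exp])
      (simp add: sum.distrib phi_nat_def sum_distrib_left del: sum.lessThan_Suc)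
  also have "\<dots> \<le> exp (s * phi_nat (Suc k) + ?c * V)"
    unfolding V_def using assms R_pos
    by (intro exp_mono add_left_mono mult_left_mono sum_le_suminf[OF summable_inv_rate_sq]) auto
  finally show ?thesis .
qed

lemma jump_mgf_neg_one_le: "jump_mgf (- 1) k \<le> exp (- phi_nat (Suc k) + V)"
proof -
  have "jump_mgf (- 1) k \<le> (\<Prod>i<Suc k. exp (- (1 / rate i) + 1 / (rate i)\<^sup>2))"
    unfolding jump_mgf_def lessThan_Suc_atMost[symmetric]
  proof (intro prod_mono conjI)
    fix i
    show "0 \<le> rate i / (rate i - - 1)"
      using rate_pos[of i] by simp
    show "rate i / (rate i - - 1) \<le> exp (- (1 / rate i) + 1 / (rate i)\<^sup>2)"
      using ratio_plus_one_le_exp[OF rate_pos[of i]] by simp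
  qed
  also have "\<dots> = exp (\<Sum>i<Suc k. - (1 / rate i) + 1 / (rate i)\<^sup>2)"
    by (rule exp_sum[OF finite_lessThan, symmetric])
  also have "\<dots> = exp (- phi_nat (Suc k) + (\<Sum>i<Suc k. 1 / (rate i)\<^sup>2))"
    by (rule arg_cong[where f = exp])
      (simp add: sum.distrib phi_nat_def sum_negf sum_subtractf del: sum.lessThan_Suc)
  also have "\<dots> \<le> exp (- phi_nat (Suc k) + V)"
    unfolding V_def by (intro exp_mono add_left_mono sum_le_suminf[OF summable_inv_rate_sq]) auto
  finally show ?thesis .
qed

lemma K_alpha_near_alpha_nat:
  assumes m: "phi_nat m \<le> t" "t < phi_nat (Suc m)"
  shows "\<bar>K_alpha b d dstar t - alpha_nat m\<bar> \<le> d_dev / R"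
proof -
  define \<theta> where "\<theta> = (t - phi_nat m) * rate m"
  have \<theta>: "0 \<le> \<theta>" "\<theta> < 1"
    using m rate_pos[of m] by (auto simp: \<theta>_def phi_nat_Suc field_simps)
  have phi1: "phi1 b d = lin_interp (\<lambda>k. \<Sum>i<k. 1 / rate i)"
    by (simp add: phi1_def rate_def)
  have "phi1 b d (real m + \<theta>) = phi_nat m + \<theta> * (1 / rate m)"
    using \<theta> by (simp add: phi1 lin_interp_partial_sums phi_nat_def)
  also have "\<dots> = t"
    using rate_pos[of m] by (simp add: \<theta>_def)
  finally have "phi1 b d (real m + \<theta>) = t" .
  then have "the_inv_into {0..} (phi1 b d) t = real m + \<theta>"
    using \<theta> rate_pos by (intro the_inv_into_f_eq) (auto simp: phi1 inj_on_lin_interp_partial_sums)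
  then have "K_alpha b d dstar t = alpha_nat m + \<theta> * ((d m - dstar) / rate m)"
    using \<theta> by (simp add: K_alpha_def alpha_fun_def lin_interp_partial_sums alpha_nat_def rate_def)
  moreover have "\<bar>d m - dstar\<bar> / rate m \<le> d_dev / R"
    using mult_mono[OF d_dev(2)[of m] inv_rate_le[of m]] d_dev(1) rate_pos[of m] by simp
  then have "\<bar>\<theta> * ((d m - dstar) / rate m)\<bar> \<le> d_dev / R"
    using \<theta> rate_pos[of m] mult_left_le_one_le[of "\<bar>d m - dstar\<bar> / rate m" \<theta>]
    by (simp add: abs_mult)
  ultimately show ?thesis by simp
qed

lemma measure_dies_after_le_alpha_nat:
  assumes lam: "0 \<le> lam" "lam < R"
  shows "\<exists>C\<ge>0. \<forall>k t. measure M (dies_after k t)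
    \<le> C * (1 / rate k) * exp (- alpha_nat k - dstar * phi_nat k - lam * (t - phi_nat k))"
proof -
  define c where "c = lam\<^sup>2 * R / (R - lam) * V"
  define C where "C = (dstar + d_dev) * exp (c + lam / R)"
  have lam_rate: "lam < rate i" for i
    using lam(2) R_le_rate[of i] by simp
  have "measure M (dies_after k t)
      \<le> C * (1 / rate k) * exp (- alpha_nat k - dstar * phi_nat k - lam * (t - phi_nat k))" for k t
  proof -
    have pq: "survival_prob k * death_prob k
        \<le> exp (- alpha_nat k - dstar * phi_nat k) * ((dstar + d_dev) * (1 / rate k))"
      by (intro mult_mono survival_prob_le death_prob_le) (auto simp: death_prob_nonneg)
    have "lam * phi_nat (Suc k) \<le> lam * phi_nat k + lam / R"
      using mult_left_mono[OF inv_rate_le[of k] lam(1)] by (simp add: phi_nat_Suc algebra_simps)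
    then have "exp (lam * phi_nat (Suc k) + c) \<le> exp (lam * phi_nat k + lam / R + c)"
      by simp
    with jump_mgf_le[OF lam, of k] have mgf: "jump_mgf lam k \<le> exp (lam * phi_nat k + lam / R + c)"
      unfolding c_def by (rule order_trans)
    have "measure M (dies_after k t) \<le> survival_prob k * death_prob k * jump_mgf lam k * exp (- lam * t)"
      by (rule measure_dies_after_le[OF lam(1) lam_rate])
    also have "\<dots> \<le> exp (- alpha_nat k - dstar * phi_nat k) * ((dstar + d_dev) * (1 / rate k))
        * exp (lam * phi_nat k + lam / R + c) * exp (- lam * t)"
      using survival_prob_pos[of k] death_prob_nonneg[of k] jump_mgf_pos[of lam k, OF lam_rate]
        d_dev(1) dstar_nonneg rate_pos[of k]
      by (intro mult_right_mono mult_mono[OF pq mgf]) auto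
    also have "\<dots> = C * (1 / rate k) * exp (- alpha_nat k - dstar * phi_nat k - lam * (t - phi_nat k))"
      by (simp add: C_def mult_exp_exp algebra_simps add_divide_distrib)
    finally show ?thesis .
  qed
  moreover have "0 \<le> C"
    using d_dev(1) dstar_nonneg by (simp add: C_def)
  ultimately show ?thesis by blast
qed

lemma measure_dies_after_le_riemann_term:
  assumes eta: "0 < eta" "dstar + 2 * eta < R"
  shows "\<exists>C\<ge>0. \<forall>k m t. k < m \<longrightarrow> phi_nat m \<le> t \<longrightarrow> measure M (dies_after k t)
    \<le> C * exp (- alpha_nat m - dstar * t) * exp (- eta * t)
       * ((phi_nat (Suc k) - phi_nat k) * exp (eta * phi_nat k))"
proof -
  have "0 \<le> dstar + 2 * eta"
    using dstar_nonneg eta(1) by simp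
  then obtain Cd where Cd_nonneg: "0 \<le> Cd" and Cd: "\<And>k t. measure M (dies_after k t)
      \<le> Cd * (1 / rate k) * exp (- alpha_nat k - dstar * phi_nat k - (dstar + 2 * eta) * (t - phi_nat k))"
    using measure_dies_after_le_alpha_nat[OF _ eta(2)] by blast
  obtain Ca where Ca: "\<And>k m. k \<le> m \<Longrightarrow> alpha_nat m - alpha_nat k \<le> eta * (phi_nat m - phi_nat k) + Ca"
    using alpha_nat_increment_le[OF eta(1)] by blast
  have "measure M (dies_after k t)
      \<le> Cd * exp Ca * exp (- alpha_nat m - dstar * t) * exp (- eta * t)
         * ((phi_nat (Suc k) - phi_nat k) * exp (eta * phi_nat k))"
    if k: "k < m" and m: "phi_nat m \<le> t" for k m t
  proof -
    have "eta * (phi_nat m - phi_nat k) \<le> eta * (t - phi_nat k)"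
      using m eta by (intro mult_left_mono) auto
    then have "alpha_nat m - alpha_nat k \<le> eta * (t - phi_nat k) + Ca"
      using Ca[of k m] k by linarith
    then have "- alpha_nat k - dstar * phi_nat k - (dstar + 2 * eta) * (t - phi_nat k)
        \<le> Ca + (- alpha_nat m - dstar * t) + - eta * t + eta * phi_nat k"
      by (simp add: algebra_simps)
    then have "exp (- alpha_nat k - dstar * phi_nat k - (dstar + 2 * eta) * (t - phi_nat k))
        \<le> exp Ca * exp (- alpha_nat m - dstar * t) * exp (- eta * t) * exp (eta * phi_nat k)"
      by (simp add: mult_exp_exp)
    then have "Cd * (1 / rate k) * exp (- alpha_nat k - dstar * phi_nat k - (dstar + 2 * eta) * (t - phi_nat k))
        \<le> Cd * (1 / rate k) * (exp Ca * exp (- alpha_nat m - dstar * t) * exp (- eta * t) * exp (eta * phi_nat k))"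
      using Cd_nonneg rate_pos[of k] by (intro mult_left_mono) auto
    also have "\<dots> = Cd * exp Ca * exp (- alpha_nat m - dstar * t) * exp (- eta * t)
        * ((phi_nat (Suc k) - phi_nat k) * exp (eta * phi_nat k))"
      by (simp add: phi_nat_Suc)
    finally show ?thesis
      using Cd[of k t] by linarith
  qed
  moreover have "0 \<le> Cd * exp Ca"
    using Cd_nonneg by simp
  ultimately show ?thesis by blast
qed

lemma sum_measure_dies_after_le:
  "\<exists>C. \<forall>t m. phi_nat m \<le> t \<longrightarrow>
     (\<Sum>k<m. measure M (dies_after k t)) \<le> C * exp (- alpha_nat m - dstar * t)"
proof -
  define eta where "eta = (R - dstar) / 4"
  have eta: "0 < eta" "dstar + 2 * eta < R"
    using dstar_lt_R by (auto simp: eta_def field_simps)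
  then obtain C where C_nonneg: "0 \<le> C" and C: "\<And>k m t. k < m \<Longrightarrow> phi_nat m \<le> t \<Longrightarrow>
      measure M (dies_after k t) \<le> C * exp (- alpha_nat m - dstar * t) * exp (- eta * t)
        * ((phi_nat (Suc k) - phi_nat k) * exp (eta * phi_nat k))"
    using measure_dies_after_le_riemann_term by blast
  have "(\<Sum>k<m. measure M (dies_after k t)) \<le> C / eta * exp (- alpha_nat m - dstar * t)"
    if m: "phi_nat m \<le> t" for t m
  proof -
    let ?c = "C * exp (- alpha_nat m - dstar * t) * exp (- eta * t)"
    have "(\<Sum>k<m. (phi_nat (Suc k) - phi_nat k) * exp (eta * phi_nat k)) \<le> (exp (eta * phi_nat m) - 1) / eta"
      using sum_increment_mult_exp_le[OF eta(1), of phi_nat m] by simp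
    also have "\<dots> \<le> exp (eta * t) / eta"
    proof (rule divide_right_mono)
      have "exp (eta * phi_nat m) \<le> exp (eta * t)"
        using mult_left_mono[OF m less_imp_le[OF eta(1)]] by simp
      then show "exp (eta * phi_nat m) - 1 \<le> exp (eta * t)" by linarith
    qed (use eta in simp)
    finally have riemann: "(\<Sum>k<m. (phi_nat (Suc k) - phi_nat k) * exp (eta * phi_nat k)) \<le> exp (eta * t) / eta" .
    have "(\<Sum>k<m. measure M (dies_after k t)) \<le> ?c * (\<Sum>k<m. (phi_nat (Suc k) - phi_nat k) * exp (eta * phi_nat k))"
      unfolding sum_distrib_left using C m by (intro sum_mono) (simp add: mult.assoc)
    also have "\<dots> \<le> ?c * (exp (eta * t) / eta)"
      using C_nonneg riemann by (intro mult_left_mono) auto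
    also have "\<dots> = C / eta * exp (- alpha_nat m - dstar * t)"
      by (simp add: exp_minus field_simps)
    finally show ?thesis .
  qed
  then show ?thesis by blast
qed

lemma measure_lifetime_gt_upper:
  "\<exists>C. \<forall>t m. phi_nat m \<le> t \<longrightarrow> t < phi_nat (Suc m) \<longrightarrow>
     measure M (lifetime_gt t) \<le> C * exp (- alpha_nat m - dstar * t)"
proof -
  obtain Cs where Cs: "\<And>t m. phi_nat m \<le> t \<Longrightarrow>
      (\<Sum>k<m. measure M (dies_after k t)) \<le> Cs * exp (- alpha_nat m - dstar * t)"
    using sum_measure_dies_after_le by blast
  have "measure M (lifetime_gt t) \<le> (exp (dstar / R) + Cs) * exp (- alpha_nat m - dstar * t)"
    if m: "phi_nat m \<le> t" "t < phi_nat (Suc m)" for t m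
  proof -
    have "dstar * (t - 1 / R) \<le> dstar * phi_nat m"
      using m(2) inv_rate_le[of m] dstar_nonneg by (intro mult_left_mono) (auto simp: phi_nat_Suc)
    then have "survival_prob m \<le> exp (dstar / R + (- alpha_nat m - dstar * t))"
      by (intro order_trans[OF survival_prob_le]) (simp add: algebra_simps)
    then have "survival_prob m \<le> exp (dstar / R) * exp (- alpha_nat m - dstar * t)"
      by (simp add: exp_add)
    then show ?thesis
      using measure_lifetime_gt_le[of t m] Cs[OF m(1)] by (simp add: algebra_simps)
  qed
  then show ?thesis by blast
qed

lemma measure_dies_after_ge_half:
  assumes "t + V + 2 \<le> phi_nat (Suc k)"
  shows "survival_prob k * death_prob k / 2 \<le> measure M (dies_after k t)"
proof -
  have "jump_mgf (- 1) k * exp t \<le> exp (- phi_nat (Suc k) + V) * exp t"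
    by (rule mult_right_mono[OF jump_mgf_neg_one_le]) simp
  also have "\<dots> \<le> exp (- 2)"
    using assms by (simp add: mult_exp_exp)
  also have "exp (- 2 :: real) \<le> 1 / 2"
    using exp_ge_add_one_self[of "2 :: real"] by (simp add: exp_minus field_simps)
  finally have "survival_prob k * death_prob k * (1 / 2)
      \<le> survival_prob k * death_prob k * (1 - jump_mgf (- 1) k * exp t)"
    using survival_prob_pos[of k] death_prob_nonneg[of k] by (intro mult_left_mono) auto
  also have "\<dots> \<le> measure M (dies_after k t)"
    by (rule measure_dies_after_ge)
  finally show ?thesis by simp
qed

lemma measure_lifetime_gt_ge_quarter:
  assumes n: "t + V + 2 \<le> phi_nat n"
  shows "survival_prob n / 4 \<le> measure M (lifetime_gt t)"
proof -
  have "\<not> summable death_prob"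
    using not_summable_d_div_b_plus_d by (simp add: death_prob_def[abs_def] rate_def)
  then obtain N0 where N0: "- ln (survival_prob n / 2) < (\<Sum>i<N0. death_prob i)"
    using not_summable_partial_sums_unbounded death_prob_nonneg by blast
  define N where "N = max N0 n"
  have "survival_prob N \<le> survival_prob N0"
    by (rule survival_prob_antimono) (simp add: N_def)
  also have "\<dots> \<le> exp (- (\<Sum>i<N0. death_prob i))"
    using survival_prob_le[of N0] by (simp add: sum_death_prob)
  also have "\<dots> \<le> exp (ln (survival_prob n / 2))"
    using N0 by simp
  also have "\<dots> = survival_prob n / 2"
    using survival_prob_pos[of n] by simp
  finally have N: "survival_prob N \<le> survival_prob n / 2" .
  have "n \<le> N" by (simp add: N_def)
  then have "(\<Sum>k\<in>{n..<N}. - (survival_prob k * death_prob k)) = survival_prob N - survival_prob n"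
    using sum_Suc_diff'[of n N survival_prob] by (simp add: survival_prob_Suc)
  then have telescope: "(\<Sum>k\<in>{n..<N}. survival_prob k * death_prob k) = survival_prob n - survival_prob N"
    by (simp add: sum_negf)
  have "survival_prob n / 4 \<le> (\<Sum>k\<in>{n..<N}. survival_prob k * death_prob k / 2)"
    using N by (simp add: telescope sum_divide_distrib[symmetric])
  also have "\<dots> \<le> (\<Sum>k\<in>{n..<N}. measure M (dies_after k t))"
  proof (intro sum_mono measure_dies_after_ge_half)
    fix k assume "k \<in> {n..<N}"
    then have "phi_nat n \<le> phi_nat (Suc k)" by (intro phi_nat_mono) auto
    with n show "t + V + 2 \<le> phi_nat (Suc k)" by linarith
  qed
  also have "\<dots> \<le> measure M (lifetime_gt t)"
    by (rule measure_lifetime_gt_ge)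
  finally show ?thesis .
qed

lemma measure_lifetime_gt_ge_survival_prob:
  assumes "0 \<le> t"
  obtains n where "t + V + 2 \<le> phi_nat n" "phi_nat n \<le> t + (V + 2 + 1 / R)"
    "survival_prob n / 4 \<le> measure M (lifetime_gt t)"
proof -
  obtain n where n: "phi_nat n \<le> t + V + 2" "t + V + 2 < phi_nat (Suc n)"
    using phi_nat_bracket[of "t + V + 2"] assms V_nonneg by auto
  have "phi_nat (Suc n) \<le> t + (V + 2 + 1 / R)"
    using n(1) inv_rate_le[of n] by (simp add: phi_nat_Suc)
  moreover have "survival_prob (Suc n) / 4 \<le> measure M (lifetime_gt t)"
    using n(2) by (intro measure_lifetime_gt_ge_quarter) simp
  ultimately show ?thesis
    using n(2) by (intro that[of "Suc n"]) auto
qed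

lemma measure_lifetime_gt_lower:
  "\<exists>C. \<forall>t m. phi_nat m \<le> t \<longrightarrow> t < phi_nat (Suc m) \<longrightarrow>
     exp (- alpha_nat m - dstar * t - C) \<le> measure M (lifetime_gt t)"
proof -
  obtain W where W: "\<And>k. exp (- alpha_nat k - dstar * phi_nat k - W) \<le> survival_prob k"
    using survival_prob_ge by blast
  define C where "C = d_dev * (V + 2 + 2 / R) + dstar * (V + 2 + 1 / R) + W + ln 4"
  have "exp (- alpha_nat m - dstar * t - C) \<le> measure M (lifetime_gt t)"
    if m: "phi_nat m \<le> t" "t < phi_nat (Suc m)" for t m
  proof -
    have "0 \<le> t"
      using phi_nat_nonneg[of m] m(1) by linarith
    then obtain n where n: "t + V + 2 \<le> phi_nat n" "phi_nat n \<le> t + (V + 2 + 1 / R)"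
      and P: "survival_prob n / 4 \<le> measure M (lifetime_gt t)"
      by (rule measure_lifetime_gt_ge_survival_prob)
    have "m \<le> n"
      using phi_nat_mono[of n m] m(1) n(1) V_nonneg by linarith
    then have "\<bar>alpha_nat n - alpha_nat m\<bar> \<le> d_dev * (phi_nat n - phi_nat m)"
      by (rule alpha_nat_diff_le)
    also have "\<dots> \<le> d_dev * (V + 2 + 2 / R)"
      using m(2) inv_rate_le[of m] n(2) d_dev(1) by (intro mult_left_mono) (auto simp: phi_nat_Suc)
    finally have alpha: "alpha_nat n - alpha_nat m \<le> d_dev * (V + 2 + 2 / R)"
      by simp
    have "dstar * phi_nat n \<le> dstar * (t + (V + 2 + 1 / R))"
      using n(2) by (rule mult_left_mono[OF _ dstar_nonneg])
    with alpha have "- alpha_nat m - dstar * t - C \<le> - alpha_nat n - dstar * phi_nat n - W - ln 4"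
      unfolding C_def distrib_left by linarith
    then have "exp (- alpha_nat m - dstar * t - C) \<le> exp (- alpha_nat n - dstar * phi_nat n - W - ln 4)"
      by simp
    also have "\<dots> = exp (- alpha_nat n - dstar * phi_nat n - W) / 4"
      by (subst exp_diff) simp
    also have "\<dots> \<le> survival_prob n / 4"
      using W[of n] by simp
    finally show ?thesis
      using P by linarith
  qed
  then show ?thesis by blast
qed

lemma log_measure_lifetime_gt_bounded:
  "\<exists>C. \<forall>t\<ge>0. 0 < measure M (lifetime_gt t) \<and>
     \<bar>ln (measure M (lifetime_gt t)) + dstar * t + K_alpha b d dstar t\<bar> \<le> C"
proof -
  obtain Cu where up: "\<And>t m. phi_nat m \<le> t \<Longrightarrow> t < phi_nat (Suc m) \<Longrightarrow>
      measure M (lifetime_gt t) \<le> Cu * exp (- alpha_nat m - dstar * t)"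
    using measure_lifetime_gt_upper by blast
  obtain Cl where lo: "\<And>t m. phi_nat m \<le> t \<Longrightarrow> t < phi_nat (Suc m) \<Longrightarrow>
      exp (- alpha_nat m - dstar * t - Cl) \<le> measure M (lifetime_gt t)"
    using measure_lifetime_gt_lower by blast
  have "0 < measure M (lifetime_gt t) \<and>
      \<bar>ln (measure M (lifetime_gt t)) + dstar * t + K_alpha b d dstar t\<bar> \<le> max Cl (ln Cu) + d_dev / R"
    if t: "0 \<le> t" for t
  proof -
    obtain m where m: "phi_nat m \<le> t" "t < phi_nat (Suc m)"
      using phi_nat_bracket[OF t] .
    let ?P = "measure M (lifetime_gt t)" and ?x = "- alpha_nat m - dstar * t"
    have pos: "0 < ?P"
      using lo[OF m] by (meson exp_gt_zero less_le_trans)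
    then have "0 < Cu * exp ?x"
      using up[OF m] by linarith
    then have Cu: "0 < Cu"
      by (simp add: zero_less_mult_iff)
    have "?x - Cl \<le> ln ?P"
      using lo[OF m] pos ln_le_cancel_iff[of "exp (?x - Cl)" ?P] by simp
    moreover have "ln ?P \<le> ln (Cu * exp ?x)"
      using up[OF m] pos Cu by simp
    moreover have "ln (Cu * exp ?x) = ln Cu + ?x"
      using Cu by (simp add: ln_mult)
    moreover have "\<bar>K_alpha b d dstar t - alpha_nat m\<bar> \<le> d_dev / R"
      by (rule K_alpha_near_alpha_nat[OF m])
    ultimately show ?thesis
      using pos by (simp add: abs_le_iff) linarith
  qed
  then show ?thesis by blast
qed

end

theorem lemma5p6:
  fixes M :: "'a measure"
    and E B :: "nat \<Rightarrow> 'a \<Rightarrow> real"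
    and b d :: "nat \<Rightarrow> real"
    and dstar lstar :: real
    and r :: "real \<Rightarrow> real"
  assumes P: "prob_space M"
    and indep: "prob_space.indep_vars M (\<lambda>_. borel) (case_sum E B) UNIV"
    and E_distr: "\<And>i. distributed M lborel (E i) (exponential_density (b i + d i))"
    and B_meas: "\<And>i. B i \<in> borel_measurable M"
    and B_01: "\<And>i \<omega>. \<omega> \<in> space M \<Longrightarrow> B i \<omega> \<in> {0, 1}"
    and B_prob: "\<And>i. measure M {\<omega> \<in> space M. B i \<omega> = 1} = b i / (b i + d i)"
    and b_pos: "\<And>i. b i > 0"
    and d_nonneg: "\<And>i. d i \<ge> 0"
    and sum1: "\<not> summable (\<lambda>i. 1 / (b i + d i))"
    and sum2: "\<not> summable (\<lambda>i. d i / (b i + d i))"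
    and sum3: "summable (\<lambda>i. 1 / (b i + d i)^2)"
    and d_lim: "d \<longlonglongrightarrow> dstar"
    and dstar_nonneg: "0 \<le> dstar"
    and dstar_lt_R: "dstar < (INF i. b i + d i)"
    and lstar_pos: "lstar > 0"
    and r_range: "\<And>t. t > 0 \<Longrightarrow> r t \<ge> 0"
    and r_cond: "(\<lambda>t. K_alpha b d dstar (lstar / (lstar + dstar) * t
                     - K_alpha b d dstar (r t) / (lstar + dstar))
                   - K_alpha b d dstar (r t)) \<in> O[at_top](\<lambda>_. 1)"
  shows "\<exists>C. \<forall>t\<ge>0. measure M {\<omega> \<in> space M. lifetime E B \<omega> > t} > 0 \<and>
           \<bar>ln (measure M {\<omega> \<in> space M. lifetime E B \<omega> > t}) + dstar * t
              + K_alpha b d dstar t\<bar> \<le> C"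
proof -
  interpret prob_space M by (rule P)
  interpret lifetime_asymptotics M E B b d dstar
    by unfold_locales (use indep E_distr B_meas B_01 B_prob b_pos d_nonneg sum1 sum2 sum3 d_lim
        dstar_nonneg dstar_lt_R in auto)
  show ?thesis
    using log_measure_lifetime_gt_bounded by (simp add: lifetime_gt_def)
qed

end
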